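(* Let $n\ge2$, $\boldsymbol{\lambda}=(\lambda_1,\dots,\lambda_n)$ a vector of positive integers, $\ell=\mathrm{lcm}(\lambda_1,\dots,\lambda_{n-1})$, $\boldsymbol{\lambda}'=(\lambda_1,\dots,\lambda_{n-1},\lambda_n+\ell)$, and suppose $\lambda_n\ge\ell$. Let $(a_1,\dots,a_{n-1},a_n',d)$ be a minimal generator of $M(\boldsymbol{\lambda}')$ of type (4), and set $\delta=d\ell-\frac{\ell}{\lambda_1}a_1-\cdots-\frac{\ell}{\lambda_{n-1}}a_{n-1}$. Then $(a_1,\dots,a_{n-1},a_n'-\delta,d)$ is a minimal generator of $M(\boldsymbol{\lambda})$ of type (4).
   Context: For a vector $\boldsymbol{\mu}$ of $n$ positive integers, $M(\boldsymbol{\mu})=\{(a_1,\dots,a_n,d)\in\mathbb{N}^{n+1}\mid a_1/\mu_1+\cdots+a_n/\mu_n\ge d\}$. A minimal generator of $M(\boldsymbol{\mu})$ is a nonzero element that cannot be written as the sum of two nonzero elements of $M(\boldsymbol{\mu})$. A minimal generator $(a_1,\dots,a_n,d)$ is of type (4) if $d>0$ and $a_ia_n>0$ for some $1\le i<n$. (Equivalently, $(a_1,\dots,a_{n-1},a_n'-\delta,d)=f^{-1}(a_1,\dots,a_{n-1},a_n',d)$ for the group automorphism $f(u_1,\dots,u_{n+1})=(u_1,\dots,u_{n-1},u_n+u_{n+1}\ell-\sum_{i<n}\frac{\ell}{\lambda_i}u_i,u_{n+1})$ of $\mathbb{Z}^{n+1}$.) *)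

theory Defs
  imports Complex_Main
begin

text \<open>Elements of N^(n+1) are represented as pairs (a, d) with a :: nat list of
  length n (the coordinates a_1..a_n, 0-indexed) and d :: nat.\<close>

definition M :: "nat list \<Rightarrow> (nat list \<times> nat) set" where
  "M mu = {(a, d). length a = length mu \<and>
            (\<Sum>i<length mu. real (a ! i) / real (mu ! i)) \<ge> real d}"

definition vzero :: "nat \<Rightarrow> nat list \<times> nat" where
  "vzero n = (replicate n 0, 0)"

definition vadd :: "nat list \<times> nat \<Rightarrow> nat list \<times> nat \<Rightarrow> nat list \<times> nat" where
  "vadd x y = (map2 (+) (fst x) (fst y), snd x + snd y)"

definition minimal_generator :: "nat list \<Rightarrow> nat list \<times> nat \<Rightarrow> bool" where
  "minimal_generator mu x \<longleftrightarrow>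
     x \<in> M mu \<and> x \<noteq> vzero (length mu) \<and>
     \<not> (\<exists>y\<in>M mu. \<exists>z\<in>M mu. y \<noteq> vzero (length mu) \<and> z \<noteq> vzero (length mu)
          \<and> x = vadd y z)"

definition type4 :: "nat list \<times> nat \<Rightarrow> bool" where
  "type4 x \<longleftrightarrow> (let a = fst x; n = length a in
     snd x > 0 \<and> (\<exists>i < n - 1. a ! i * a ! (n - 1) > 0))"

end

theory Submission
  imports Defs
begin

(* Write \<lambda> = \<mu> @ [L], so that \<lambda>' = \<mu> @ [L + l], and let g = d - \<Sum> a\<^sub>i / \<mu>\<^sub>i be the
   slack of (a, d) with respect to \<mu>. Since every \<mu>\<^sub>i divides l, the number \<delta> = l g is an
   integer, and adding \<delta> to the last coordinate turns the condition L g \<le> a\<^sub>n of M(\<lambda>) into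
   the condition (L + l) g \<le> a\<^sub>n + \<delta> of M(\<lambda>'); this shift is additive.
   For the minimal generator (a, a\<^sub>n', d), minimality against the unit vector e\<^sub>n makes its
   preimage (a, b, d) tight: L g \<le> b < L g + 1, whence g > 0 and b > 0. In a splitting of
   (a, b, d) inside M(\<lambda>) both summands have nonnegative slack, because a negative slack is
   at most -1/l \<le> -1/L (this is where \<lambda>\<^sub>n \<ge> l enters), which tightness forbids. Summands of
   nonnegative slack shift into M(\<lambda>'), where they would split (a, a\<^sub>n', d). *)

definition slack :: "nat list \<Rightarrow> nat list \<Rightarrow> nat \<Rightarrow> real" where
  "slack mu u e = real e - (\<Sum>i<length mu. real (u ! i) / real (mu ! i))"

definition defect :: "nat list \<Rightarrow> nat \<Rightarrow> nat list \<Rightarrow> nat \<Rightarrow> int" where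
  "defect mu l u e = int e * int l - (\<Sum>i<length mu. int (l div mu ! i) * int (u ! i))"

lemma butlast_snoc_nth: "length xs = Suc k \<Longrightarrow> xs = butlast xs @ [xs ! k]"
  by (cases xs rule: rev_cases) auto

lemma vadd_snoc:
  assumes "length u = length w"
  shows "vadd (u @ [x], e) (w @ [y], f) = (map2 (+) u w @ [x + y], e + f)"
  using assms by (simp add: vadd_def)

lemma snoc_eq_vzero_iff:
  "(u @ [x], e) = vzero (Suc k) \<longleftrightarrow> u = replicate k 0 \<and> x = 0 \<and> e = 0"
proof -
  have "replicate (Suc k) (0::nat) = replicate k 0 @ [0]"
    by (simp add: replicate_append_same)
  then show ?thesis
    unfolding vzero_def by simp
qed

lemma type4_snoc_iff:
  "type4 (u @ [x], e) \<longleftrightarrow> 0 < e \<and> 0 < x \<and> (\<exists>i<length u. 0 < u ! i)"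
  by (auto simp: type4_def nth_append)

lemma M_snoc_cases:
  assumes "y \<in> M (mu @ [c])"
  obtains u x e where "y = (u @ [x], e)" "length u = length mu"
proof -
  obtain v e where "y = (v, e)" "length v = Suc (length mu)"
    using assms by (cases y) (simp add: M_def)
  then show thesis
    using that[of "butlast v" "v ! length mu" e] butlast_snoc_nth[of v "length mu"] by simp
qed

lemma mem_M_snoc_iff:
  assumes "0 < c"
  shows "(u @ [x], e) \<in> M (mu @ [c]) \<longleftrightarrow>
           length u = length mu \<and> real c * slack mu u e \<le> real x"
proof -
  have "(u @ [x], e) \<in> M (mu @ [c]) \<longleftrightarrow>
          length u = length mu \<and> slack mu u e \<le> real x / real c"
    by (auto simp: M_def slack_def nth_append)
  then show ?thesis
    using assms by (simp add: pos_le_divide_eq mult.commute)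
qed

lemma slack_replicate_zero: "length mu \<le> k \<Longrightarrow> slack mu (replicate k 0) 0 = 0"
  by (simp add: slack_def)

lemma slack_map2_add:
  assumes "length mu \<le> length u" "length mu \<le> length w"
  shows "slack mu (map2 (+) u w) (e + f) = slack mu u e + slack mu w f"
  using assms by (simp add: slack_def sum.distrib add_divide_distrib)

lemma defect_map2_add:
  assumes "length mu \<le> length u" "length mu \<le> length w"
  shows "defect mu l (map2 (+) u w) (e + f) = defect mu l u e + defect mu l w f"
  using assms by (simp add: defect_def sum.distrib[symmetric] algebra_simps)

lemma defect_eq:
  assumes "\<forall>c\<in>set mu. c dvd l"
  shows "real_of_int (defect mu l u e) = real l * slack mu u e"
proof -
  have "real (l div mu ! i) = real l / real (mu ! i)" if "i < length mu" for i
    using assms that by (simp add: real_of_nat_div)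
  then show ?thesis
    by (simp add: defect_def slack_def sum_distrib_left right_diff_distrib)
qed

lemma minimal_generator_snoc_decrement:
  assumes "minimal_generator (mu @ [c]) (u @ [Suc x], e)" "0 < c" "0 < e"
  shows "(u @ [x], e) \<notin> M (mu @ [c])"
proof
  assume mem: "(u @ [x], e) \<in> M (mu @ [c])"
  then have len: "length u = length mu"
    using \<open>0 < c\<close> by (simp add: mem_M_snoc_iff)
  define unit_vec where "unit_vec = (replicate (length mu) 0 @ [1::nat], 0::nat)"
  have "unit_vec \<in> M (mu @ [c])"
    using \<open>0 < c\<close> by (simp add: unit_vec_def mem_M_snoc_iff slack_replicate_zero)
  moreover have "unit_vec \<noteq> vzero (length (mu @ [c]))" "(u @ [x], e) \<noteq> vzero (length (mu @ [c]))"
    using \<open>0 < e\<close> by (simp_all add: unit_vec_def snoc_eq_vzero_iff)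
  moreover have "(u @ [Suc x], e) = vadd (u @ [x], e) unit_vec"
  proof -
    have "map2 (+) u (replicate (length mu) 0) = u"
      using len by (simp add: list_eq_iff_nth_eq)
    then show ?thesis
      using len by (simp add: unit_vec_def vadd_snoc)
  qed
  ultimately show False
    using mem assms(1) unfolding minimal_generator_def by blast
qed

lemma minimal_generator_shift_preimage_tight:
  assumes dvd: "\<forall>c\<in>set mu. c dvd l" and "0 < L"
    and gen: "minimal_generator (mu @ [L + l]) (u @ [x'], e)" and "0 < e" "0 < x'"
  obtains x where "int x' = int x + defect mu l u e" "0 < x" "(u @ [x], e) \<in> M (mu @ [L])"
    "real x < real L * slack mu u e + 1"
proof -
  define A where "A = int x' - defect mu l u e"
  define g where "g = slack mu u e"
  have x'_eq: "real x' = real_of_int A + real l * g"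
    using defect_eq[OF dvd, of u e] by (simp add: A_def g_def)
  have "(u @ [x'], e) \<in> M (mu @ [L + l])"
    using gen by (simp add: minimal_generator_def)
  then have len: "length u = length mu" and "real (L + l) * g \<le> real x'"
    using \<open>0 < L\<close> by (simp_all add: mem_M_snoc_iff g_def)
  then have A_lower: "real L * g \<le> real_of_int A"
    using x'_eq by (simp add: distrib_right)
  have "(u @ [x' - 1], e) \<notin> M (mu @ [L + l])"
    using minimal_generator_snoc_decrement[of mu "L + l" u "x' - 1" e] gen \<open>0 < L\<close> \<open>0 < e\<close> \<open>0 < x'\<close>
    by simp
  then have "real x' - 1 < real (L + l) * g"
    using len \<open>0 < L\<close> \<open>0 < x'\<close> by (simp add: mem_M_snoc_iff g_def)
  then have A_upper: "real_of_int A < real L * g + 1"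
    using x'_eq by (simp add: distrib_right)
  have "0 < (real L + real l) * g"
    using x'_eq A_upper \<open>0 < x'\<close> by (simp add: distrib_right)
  then have "0 < real L * g"
    using \<open>0 < L\<close> by (simp add: zero_less_mult_iff add_pos_nonneg)
  then have "0 < A"
    using A_lower by linarith
  show thesis
  proof
    show "int x' = int (nat A) + defect mu l u e" "0 < nat A"
      using \<open>0 < A\<close> by (simp_all add: A_def)
    show "real (nat A) < real L * slack mu u e + 1" "(u @ [nat A], e) \<in> M (mu @ [L])"
      using A_lower A_upper \<open>0 < A\<close> \<open>0 < L\<close> len by (simp_all add: mem_M_snoc_iff g_def)
  qed
qed

lemma slack_nonneg_if_sum_tight:
  assumes dvd: "\<forall>c\<in>set mu. c dvd l" and "0 < l" "l \<le> L"
    and partner: "(w @ [y], f) \<in> M (mu @ [L])"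
    and tight: "real y < real L * (slack mu u e + slack mu w f) + 1"
  shows "0 \<le> slack mu u e"
proof (rule ccontr)
  assume "\<not> 0 \<le> slack mu u e"
  then have neg: "slack mu u e < 0"
    by simp
  then have "real_of_int (defect mu l u e) < 0"
    using defect_eq[OF dvd, of u e] \<open>0 < l\<close> by (simp add: mult_pos_neg)
  then have "defect mu l u e < 0"
    by simp
  then have "real_of_int (defect mu l u e) \<le> -1"
    by simp
  then have "real l * slack mu u e \<le> -1"
    using defect_eq[OF dvd] by simp
  moreover have "real L * slack mu u e \<le> real l * slack mu u e"
    using \<open>l \<le> L\<close> neg by (simp add: mult_right_mono_neg)
  moreover have "real L * slack mu w f \<le> real y"
    using partner \<open>0 < l\<close> \<open>l \<le> L\<close> by (simp add: mem_M_snoc_iff)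
  ultimately show False
    using tight by (simp add: distrib_left)
qed

lemma shift_into_M:
  assumes dvd: "\<forall>c\<in>set mu. c dvd l" and "0 < L"
    and mem: "(u @ [x], e) \<in> M (mu @ [L])" and nz: "(u @ [x], e) \<noteq> vzero (Suc (length mu))"
    and "0 \<le> slack mu u e"
  obtains x' where "int x' = int x + defect mu l u e" "(u @ [x'], e) \<in> M (mu @ [L + l])"
    "(u @ [x'], e) \<noteq> vzero (Suc (length mu))"
proof
  define x' where "x' = nat (int x + defect mu l u e)"
  have len: "length u = length mu" and "real L * slack mu u e \<le> real x"
    using mem \<open>0 < L\<close> by (simp_all add: mem_M_snoc_iff)
  moreover have defect: "real_of_int (defect mu l u e) = real l * slack mu u e"
    using defect_eq[OF dvd] .
  ultimately have x'_bound: "real (L + l) * slack mu u e \<le> real x + real_of_int (defect mu l u e)"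
    by (simp add: distrib_right)
  have "0 \<le> real_of_int (defect mu l u e)"
    using defect \<open>0 \<le> slack mu u e\<close> by simp
  then show x'_int: "int x' = int x + defect mu l u e"
    by (simp add: x'_def)
  then have "real x' = real x + real_of_int (defect mu l u e)"
    by (metis of_int_add of_int_of_nat_eq)
  then show "(u @ [x'], e) \<in> M (mu @ [L + l])"
    using x'_bound len \<open>0 < L\<close> by (simp add: mem_M_snoc_iff)
  show "(u @ [x'], e) \<noteq> vzero (Suc (length mu))"
  proof
    assume "(u @ [x'], e) = vzero (Suc (length mu))"
    then have "u = replicate (length mu) 0" "e = 0" "x' = 0"
      by (simp_all add: snoc_eq_vzero_iff)
    then show False
      using nz x'_int by (simp add: snoc_eq_vzero_iff defect_def)
  qed
qed

lemma minimal_generator_shift_preimage: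
  assumes dvd: "\<forall>c\<in>set mu. c dvd l" and "0 < l" "l \<le> L"
    and gen: "minimal_generator (mu @ [L + l]) (u @ [x'], e)"
    and x': "int x' = int x + defect mu l u e"
    and mem: "(u @ [x], e) \<in> M (mu @ [L])" and tight: "real x < real L * slack mu u e + 1"
    and nz: "(u @ [x], e) \<noteq> vzero (Suc (length mu))"
  shows "minimal_generator (mu @ [L]) (u @ [x], e)"
  unfolding minimal_generator_def length_append_singleton
proof (intro conjI mem nz notI)
  have "0 < L"
    using \<open>0 < l\<close> \<open>l \<le> L\<close> by simp
  assume "\<exists>y\<in>M (mu @ [L]). \<exists>z\<in>M (mu @ [L]). y \<noteq> vzero (Suc (length mu)) \<and>
            z \<noteq> vzero (Suc (length mu)) \<and> (u @ [x], e) = vadd y z"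
  then obtain y z where "y \<in> M (mu @ [L])" "z \<in> M (mu @ [L])"
    and nz_y: "y \<noteq> vzero (Suc (length mu))" and nz_z: "z \<noteq> vzero (Suc (length mu))"
    and split: "(u @ [x], e) = vadd y z"
    by blast
  obtain p px e1 where y: "y = (p @ [px], e1)" "length p = length mu"
    using M_snoc_cases[OF \<open>y \<in> M (mu @ [L])\<close>] by blast
  obtain q qx e2 where z: "z = (q @ [qx], e2)" "length q = length mu"
    using M_snoc_cases[OF \<open>z \<in> M (mu @ [L])\<close>] by blast
  have u: "u = map2 (+) p q" and x: "x = px + qx" and e: "e = e1 + e2"
    using split y z by (simp_all add: vadd_snoc)
  then have slack: "slack mu u e = slack mu p e1 + slack mu q e2"
    using y z by (simp add: slack_map2_add)
  have "0 \<le> slack mu p e1"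
    using slack_nonneg_if_sum_tight[OF dvd \<open>0 < l\<close> \<open>l \<le> L\<close>, of q qx e2 p e1]
      \<open>z \<in> M (mu @ [L])\<close> z tight slack x by simp
  then obtain px' where px': "int px' = int px + defect mu l p e1"
    and P: "(p @ [px'], e1) \<in> M (mu @ [L + l])" "(p @ [px'], e1) \<noteq> vzero (Suc (length mu))"
    using shift_into_M[OF dvd \<open>0 < L\<close>] \<open>y \<in> M (mu @ [L])\<close> nz_y y by blast
  have "0 \<le> slack mu q e2"
    using slack_nonneg_if_sum_tight[OF dvd \<open>0 < l\<close> \<open>l \<le> L\<close>, of p px e1 q e2]
      \<open>y \<in> M (mu @ [L])\<close> y tight slack x by (simp add: add.commute)
  then obtain qx' where qx': "int qx' = int qx + defect mu l q e2"
    and Q: "(q @ [qx'], e2) \<in> M (mu @ [L + l])" "(q @ [qx'], e2) \<noteq> vzero (Suc (length mu))"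
    using shift_into_M[OF dvd \<open>0 < L\<close>] \<open>z \<in> M (mu @ [L])\<close> nz_z z by blast
  have "defect mu l u e = defect mu l p e1 + defect mu l q e2"
    using u e y z by (simp add: defect_map2_add)
  then have "x' = px' + qx'"
    using x' px' qx' x by simp
  then have "(u @ [x'], e) = vadd (p @ [px'], e1) (q @ [qx'], e2)"
    using u e y z by (simp add: vadd_snoc)
  then show False
    using gen P Q unfolding minimal_generator_def length_append_singleton by blast
qed

lemma type4_minimal_generator_shift_preimage:
  assumes dvd: "\<forall>c\<in>set mu. c dvd l" and "0 < l" "l \<le> L"
    and gen: "minimal_generator (mu @ [L + l]) (u @ [x'], e)" and "type4 (u @ [x'], e)"
  obtains x where "int x = int x' - defect mu l u e"
    "minimal_generator (mu @ [L]) (u @ [x], e)" "type4 (u @ [x], e)"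
proof -
  have "0 < e" "0 < x'" and pos: "\<exists>i<length u. 0 < u ! i"
    using \<open>type4 (u @ [x'], e)\<close> by (simp_all add: type4_snoc_iff)
  obtain x where x': "int x' = int x + defect mu l u e" and "0 < x"
    and mem: "(u @ [x], e) \<in> M (mu @ [L])" and tight: "real x < real L * slack mu u e + 1"
    using minimal_generator_shift_preimage_tight[OF dvd _ gen \<open>0 < e\<close> \<open>0 < x'\<close>]
      \<open>0 < l\<close> \<open>l \<le> L\<close> by auto
  have "(u @ [x], e) \<noteq> vzero (Suc (length mu))"
    using \<open>0 < e\<close> by (simp add: snoc_eq_vzero_iff)
  with minimal_generator_shift_preimage[OF dvd \<open>0 < l\<close> \<open>l \<le> L\<close> gen x' mem tight]
  show thesis
    using that[of x] x' \<open>0 < e\<close> \<open>0 < x\<close> pos by (simp add: type4_snoc_iff)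
qed

theorem proposition5p7:
  fixes lam :: "nat list" and a :: "nat list" and d :: nat
  assumes "length lam = n" and "n \<ge> 2"
    and "\<forall>i<n. lam ! i > 0"
    and "l = Lcm (set (butlast lam))"
    and "lam' = butlast lam @ [lam ! (n - 1) + l]"
    and "lam ! (n - 1) \<ge> l"
    and "minimal_generator lam' (a, d)" and "type4 (a, d)"
    and "\<delta> = int d * int l - (\<Sum>i<n - 1. int (l div lam ! i) * int (a ! i))"
  shows "\<exists>b. int b = int (a ! (n - 1)) - \<delta> \<and>
             minimal_generator lam (butlast a @ [b], d) \<and> type4 (butlast a @ [b], d)"
proof -
  define mu where "mu = butlast lam"
  have lam: "lam = mu @ [lam ! (n - 1)]"
    using butlast_snoc_nth[of lam "n - 1"] assms(1,2) by (simp add: mu_def)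
  have dvd: "\<forall>c\<in>set mu. c dvd l"
    using assms(4) by (simp add: mu_def)
  have "0 \<notin> set mu"
    using assms(1,3) lam by (metis in_set_conv_nth in_set_butlastD less_irrefl mu_def)
  then have "0 < l"
    using assms(4) Lcm_0_iff[OF finite_set, of mu] by (metis gr0I mu_def)
  have "(a, d) \<in> M lam'"
    using assms(7) by (simp add: minimal_generator_def)
  then have "length a = n"
    using assms(1,2,5) by (simp add: M_def)
  then have a: "a = butlast a @ [a ! (n - 1)]"
    using butlast_snoc_nth[of a "n - 1"] assms(2) by simp
  have "\<delta> = defect mu l (butlast a) d"
    using assms(1,9) \<open>length a = n\<close> by (auto simp: defect_def mu_def nth_butlast intro!: sum.cong)
  moreover obtain b where "int b = int (a ! (n - 1)) - defect mu l (butlast a) d"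
    "minimal_generator lam (butlast a @ [b], d)" "type4 (butlast a @ [b], d)"
    using type4_minimal_generator_shift_preimage[OF dvd \<open>0 < l\<close> assms(6), of "butlast a"]
      assms(5,7,8) a lam by (metis mu_def)
  ultimately show ?thesis
    by blast
qed

end
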